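(* Suppose $\widehat{\mathcal L}^{Y\text{-}A\text{-}B}$-uniform-monotonicity holds for the SCC $F$. Then (a) for all $(j,\theta')\in\mathcal I\times\Theta$, if $Z^*$ is a $j$-$Z^*$-$\theta'$-max set then $Z^*\subseteq F(\theta')$; and (b) for all $(j,\theta,\theta')\in\mathcal I\times\Theta\times\Theta$, if $\widehat\Gamma_j^{A\text{-}B}(\theta)$ is a $j$-$Z^*$-$\theta'$-max set then $\widehat\Gamma_j^{A\text{-}B}(\theta)\subseteq F(\theta')$, where $\widehat\Gamma_j^{A\text{-}B}(\theta)=\bigcup_{y\in\widehat{\mathcal L}_j^{Y\text{-}A\text{-}B}(\mathrm{UNIF}[F(\theta)],\theta)}\mathrm{SUPP}[y]$.
   Context: Standing setup: $\mathcal I=\{1,\dots,I\}$ finite, $I\ge 3$; $\Theta$ finite or countably infinite; $Z$ finite; $Y=\Delta(Z)$; $F:\Theta\to 2^Z\setminus\{\emptyset\}$; $u_i^\theta:Z\to\mathbb R$, $U_i^\theta(y)=\sum_zy_zu_i^\theta(z)$; $\mathcal L_i^Y(\alpha,\theta)=\{y\in Y:U_i^\theta(\alpha)\ge U_i^\theta(y)\}$, $\mathcal L_i^Z(\alpha,\theta)=\{z\in Z:U_i^\theta(\alpha)\ge u_i^\theta(z)\}$, $\mathcal L_i^Z(E,\theta)=\bigcap_{z\in E}\mathcal L_i^Z(z,\theta)$; UNIF$(E)$ is the uniform lottery on $E$. A nonempty $E\subseteq Z$ is an $i$-max set if for some $\theta$, $E\subseteq\arg\max_{z\in E}u_i^\theta(z)$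 and $E\subseteq\arg\max_{z\in Z}u_j^\theta(z)$ for all $j\ne i$. $Z^*=\bigcup_\theta F(\theta)$ if $Z$ is an $i$-max set for some $i$, else $Z^*=Z$. A nonempty $E\subseteq Z^*$ is an $i$-$Z^*$-$\theta$-max set if $E\subseteq\arg\max_{z\in E}u_i^\theta(z)$ and $E\subseteq\arg\max_{z\in Z^*}u_j^\theta(z)$ for all $j\ne i$; $\Lambda^i(E)=\{\theta:E\text{ is an }i\text{-}Z^*\text{-}\theta\text{-max set}\}$ ($=\emptyset$ for $E=\emptyset$); $E$ is an $i$-$Z^*$-max set if $\Lambda^i(E)\ne\emptyset$. $\Theta_i^\theta=\{\theta':F(\theta)\text{ is an }i\text{-}Z^*\text{-}\theta'\text{-max set and }F(\theta)\subseteq F(\theta')\}$; $\Xi_i(\theta)=\{K\subseteq\Theta_i^\theta,K\ne\emptyset:\Theta_i^\theta\cap\Lambda^i(Z^*\cap\mathcal L_i^Z(F(\theta),\theta)\cap\bigcap_{\theta'\in K}F(\theta'))=K\}$. $\widehat{\mathcal L}_i^{Y\text{-}A\text{-}B}(\mathrm{UNIF}[F(\theta)],\theta)=\Delta[Z^*\cap\mathcal L_i^Z(F(\theta),\theta)\cap\bigcup_{K\in\Xi_i(\theta)}\bigcap_{\theta'\in K}F(\theta')]$ if $F(\theta)\subseteq\arg\min_{z\in Z^*}u_i^\theta(z)$, $\Xi_i(\theta)\ne\emptyset$ and $Z^*\cap\mathcal L_i^Z(F(\theta),\theta)$ is an $i$-$Z^*$-max set; otherwise $\Delta(Z^* )\cap\mathcal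 L_i^Y(\mathrm{UNIF}[F(\theta)],\theta)$. $\widehat{\mathcal L}^{Y\text{-}A\text{-}B}$-uniform-monotonicity: for all $\theta,\theta'$, [$\widehat{\mathcal L}_i^{Y\text{-}A\text{-}B}(\mathrm{UNIF}[F(\theta)],\theta)\subseteq\mathcal L_i^Y(\mathrm{UNIF}[F(\theta)],\theta')$ for all $i$] implies $F(\theta)\subseteq F(\theta')$. *)

theory Defs
  imports Complex_Main "HOL-Library.Countable"
begin

text \<open>Agents: a finite type 'i; states: a countable type 'th; outcomes: a finite type 'z.
  u :: 'i => 'th => 'z => real gives u_i^theta; F :: 'th => 'z set is the SCC.
  Lotteries in Y = Delta(Z) are represented as functions 'z => real.\<close>

definition lottery :: "('z::finite \<Rightarrow> real) \<Rightarrow> bool" where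
  "lottery y \<longleftrightarrow> (\<forall>z. y z \<ge> 0) \<and> sum y UNIV = 1"

definition supp :: "('z \<Rightarrow> real) \<Rightarrow> 'z set" where
  "supp y = {z. y z \<noteq> 0}"

definition Lot :: "'z::finite set \<Rightarrow> ('z \<Rightarrow> real) set" where
  "Lot E = {y. lottery y \<and> supp y \<subseteq> E}"

definition unif :: "'z set \<Rightarrow> ('z \<Rightarrow> real)" where
  "unif E = (\<lambda>z. if z \<in> E then 1 / real (card E) else 0)"

definition EU :: "('i \<Rightarrow> 'th \<Rightarrow> 'z::finite \<Rightarrow> real) \<Rightarrow> 'i \<Rightarrow> 'th \<Rightarrow> ('z \<Rightarrow> real) \<Rightarrow> real" where
  "EU u i th y = (\<Sum>z\<in>UNIV. y z * u i th z)"

definition LY :: "('i \<Rightarrow> 'th \<Rightarrow> 'z::finite \<Rightarrow> real) \<Rightarrow> 'i \<Rightarrow> ('z \<Rightarrow> real) \<Rightarrow> 'th \<Rightarrow> ('z \<Rightarrow> real) set" where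
  "LY u i \<alpha> th = {y. lottery y \<and> EU u i th \<alpha> \<ge> EU u i th y}"

definition LZ :: "('i \<Rightarrow> 'th \<Rightarrow> 'z \<Rightarrow> real) \<Rightarrow> 'i \<Rightarrow> 'z set \<Rightarrow> 'th \<Rightarrow> 'z set" where
  "LZ u i E th = {z. \<forall>z'\<in>E. u i th z' \<ge> u i th z}"

definition argmax_on :: "('z \<Rightarrow> real) \<Rightarrow> 'z set \<Rightarrow> 'z set" where
  "argmax_on f S = {z \<in> S. \<forall>z'\<in>S. f z' \<le> f z}"

definition argmin_on :: "('z \<Rightarrow> real) \<Rightarrow> 'z set \<Rightarrow> 'z set" where
  "argmin_on f S = {z \<in> S. \<forall>z'\<in>S. f z \<le> f z'}"

definition imax :: "('i \<Rightarrow> 'th \<Rightarrow> 'z \<Rightarrow> real) \<Rightarrow> 'i \<Rightarrow> 'z set \<Rightarrow> bool" where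
  "imax u i E \<longleftrightarrow> E \<noteq> {} \<and> (\<exists>th. E \<subseteq> argmax_on (u i th) E \<and>
      (\<forall>j. j \<noteq> i \<longrightarrow> E \<subseteq> argmax_on (u j th) UNIV))"

definition Zstar :: "('i \<Rightarrow> 'th \<Rightarrow> 'z \<Rightarrow> real) \<Rightarrow> ('th \<Rightarrow> 'z set) \<Rightarrow> 'z set" where
  "Zstar u F = (if \<exists>i. imax u i UNIV then (\<Union>th. F th) else UNIV)"

definition zmax :: "('i \<Rightarrow> 'th \<Rightarrow> 'z \<Rightarrow> real) \<Rightarrow> ('th \<Rightarrow> 'z set) \<Rightarrow> 'i \<Rightarrow> 'th \<Rightarrow> 'z set \<Rightarrow> bool" where
  "zmax u F i th E \<longleftrightarrow> E \<noteq> {} \<and> E \<subseteq> Zstar u F \<and> E \<subseteq> argmax_on (u i th) E \<and>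
      (\<forall>j. j \<noteq> i \<longrightarrow> E \<subseteq> argmax_on (u j th) (Zstar u F))"

definition Lam :: "('i \<Rightarrow> 'th \<Rightarrow> 'z \<Rightarrow> real) \<Rightarrow> ('th \<Rightarrow> 'z set) \<Rightarrow> 'i \<Rightarrow> 'z set \<Rightarrow> 'th set" where
  "Lam u F i E = {th. zmax u F i th E}"

definition ThetaI :: "('i \<Rightarrow> 'th \<Rightarrow> 'z \<Rightarrow> real) \<Rightarrow> ('th \<Rightarrow> 'z set) \<Rightarrow> 'i \<Rightarrow> 'th \<Rightarrow> 'th set" where
  "ThetaI u F i th = {th'. zmax u F i th' (F th) \<and> F th \<subseteq> F th'}"

definition Xi :: "('i \<Rightarrow> 'th \<Rightarrow> 'z \<Rightarrow> real) \<Rightarrow> ('th \<Rightarrow> 'z set) \<Rightarrow> 'i \<Rightarrow> 'th \<Rightarrow> 'th set set" where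
  "Xi u F i th = {K. K \<subseteq> ThetaI u F i th \<and> K \<noteq> {} \<and>
      ThetaI u F i th \<inter> Lam u F i (Zstar u F \<inter> LZ u i (F th) th \<inter> (\<Inter>th'\<in>K. F th')) = K}"

definition LhatAB :: "('i \<Rightarrow> 'th \<Rightarrow> 'z::finite \<Rightarrow> real) \<Rightarrow> ('th \<Rightarrow> 'z set) \<Rightarrow> 'i \<Rightarrow> 'th \<Rightarrow> ('z \<Rightarrow> real) set" where
  "LhatAB u F i th =
     (if F th \<subseteq> argmin_on (u i th) (Zstar u F) \<and> Xi u F i th \<noteq> {} \<and>
         Lam u F i (Zstar u F \<inter> LZ u i (F th) th) \<noteq> {}
      then Lot (Zstar u F \<inter> LZ u i (F th) th \<inter> (\<Union>K\<in>Xi u F i th. \<Inter>th'\<in>K. F th'))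
      else Lot (Zstar u F) \<inter> LY u i (unif (F th)) th)"

definition unif_mono_AB :: "('i \<Rightarrow> 'th \<Rightarrow> 'z::finite \<Rightarrow> real) \<Rightarrow> ('th \<Rightarrow> 'z set) \<Rightarrow> bool" where
  "unif_mono_AB u F \<longleftrightarrow> (\<forall>th th'.
      (\<forall>i. LhatAB u F i th \<subseteq> LY u i (unif (F th)) th') \<longrightarrow> F th \<subseteq> F th')"

definition GammaAB :: "('i \<Rightarrow> 'th \<Rightarrow> 'z::finite \<Rightarrow> real) \<Rightarrow> ('th \<Rightarrow> 'z set) \<Rightarrow> 'i \<Rightarrow> 'th \<Rightarrow> 'z set" where
  "GammaAB u F j th = (\<Union>y\<in>LhatAB u F j th. supp y)"

end

theory Submission
  imports Defs
begin

text \<open>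
  Monotonicity is applied to a pair \<open>\<theta>, \<theta>'\<close> such that some \<open>j\<close>-\<open>Z\<^sup>*\<close>-\<open>\<theta>'\<close>-max set \<open>E\<close>
  contains both \<open>F \<theta>\<close> and the supports of all lotteries in \<open>\<widehat>L\<^sub>j(\<theta>)\<close>: agent \<open>j\<close> is
  indifferent on \<open>E\<close> and every other agent is maximised on \<open>E\<close> within \<open>Z\<^sup>*\<close>, so no lottery in
  \<open>\<widehat>L\<^sub>i(\<theta>)\<close> beats \<open>UNIF[F \<theta>]\<close> at \<open>\<theta>'\<close>, whence \<open>F \<theta> \<subseteq> F \<theta>'\<close>.
  For (a) take \<open>E = Z\<^sup>*\<close>; then \<open>Z\<^sup>*\<close> is the union of all \<open>F \<theta>\<close>, since otherwise \<open>Z\<^sup>* = Z\<close>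
  would be a \<open>j\<close>-max set.
  For (b) take \<open>E = \<widehat>\<Gamma>\<^sub>j(\<theta>)\<close>, which contains \<open>F \<theta>\<close>, so \<open>\<theta>' \<in> \<Theta>\<^sub>j\<^sup>\<theta>\<close>.
  If \<open>\<widehat>L\<^sub>j\<close> takes its restricted form, \<open>\<theta>'\<close> lies in every \<open>K \<in> \<Xi>\<^sub>j(\<theta>)\<close> whose intersection
  meets \<open>\<widehat>\<Gamma>\<^sub>j(\<theta>)\<close>. Otherwise, if \<open>F \<theta>\<close> is \<open>j\<close>-minimal in \<open>Z\<^sup>*\<close>, the greatest fixed point of
  \<open>K \<mapsto> \<Theta>\<^sub>j\<^sup>\<theta> \<inter> \<Lambda>\<^sup>j(\<dots> \<inter> \<Inter>K F)\<close> is a nonempty element of \<open>\<Xi>\<^sub>j(\<theta>)\<close>, so the restricted form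
  applies after all; and if it is not, mixing with a \<open>j\<close>-worst outcome shows \<open>\<widehat>\<Gamma>\<^sub>j(\<theta>) = Z\<^sup>*\<close>,
  which is case (a).
\<close>

lemma lottery_unif: "A \<noteq> {} \<Longrightarrow> lottery (unif (A::'z::finite set))"
  by (simp add: lottery_def unif_def sum.If_cases card_gt_0_iff)

lemma supp_unif: "A \<noteq> {} \<Longrightarrow> supp (unif (A::'z::finite set)) = A"
  by (auto simp: supp_def unif_def card_gt_0_iff)

lemma unif_in_Lot: "z \<in> S \<Longrightarrow> unif {z} \<in> Lot (S::'z::finite set)"
  using lottery_unif[of "{z}"] supp_unif[of "{z}"] by (simp add: Lot_def)

lemma lottery_weighted_sum_mono:
  assumes "lottery y" "\<forall>z\<in>supp y. f z \<le> g z"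
  shows "(\<Sum>z\<in>UNIV. y z * f z) \<le> (\<Sum>z\<in>UNIV. y z * g z)"
proof (rule sum_mono)
  fix z
  show "y z * f z \<le> y z * g z"
    using assms by (cases "z \<in> supp y") (auto simp: lottery_def supp_def intro: mult_left_mono)
qed

lemma lottery_weighted_sum_const: "lottery y \<Longrightarrow> (\<Sum>z\<in>UNIV. y z * c) = c"
  by (simp add: lottery_def sum_distrib_right[symmetric])

lemma EU_le_if_bounded_on_supp:
  assumes "lottery y" "supp y \<subseteq> E" "\<forall>z\<in>E. u i th z \<le> c"
  shows "EU u i th y \<le> c"
  using lottery_weighted_sum_mono[of y "u i th" "\<lambda>_. c"] lottery_weighted_sum_const[of y c] assms
  unfolding EU_def by auto

lemma EU_ge_if_bounded_on_supp:
  assumes "lottery y" "supp y \<subseteq> E" "\<forall>z\<in>E. c \<le> u i th z"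
  shows "c \<le> EU u i th y"
  using lottery_weighted_sum_mono[of y "\<lambda>_. c" "u i th"] lottery_weighted_sum_const[of y c] assms
  unfolding EU_def by auto

lemma EU_unif_const:
  assumes "A \<noteq> {}" "\<forall>z\<in>A. u i th z = c"
  shows "EU u i th (unif A) = c"
  using EU_le_if_bounded_on_supp[of "unif A" A u i th c] EU_ge_if_bounded_on_supp[of "unif A" A c u i th]
    lottery_unif[OF assms(1)] supp_unif[OF assms(1)] assms(2) by auto

lemma EU_unif_singleton: "EU u i th (unif {z}) = u i th z"
  by (rule EU_unif_const) auto

lemma EU_unif_gt_min:
  assumes "a \<in> A" "u i th b < u i th a" "\<forall>x\<in>A. u i th b \<le> u i th x"
  shows "u i th b < EU u i th (unif A)"
proof -
  have A: "A \<noteq> {}" "card A > 0" using assms(1) by (auto simp: card_gt_0_iff)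
  have "u i th b = (\<Sum>x\<in>UNIV. unif A x * u i th b)"
    using lottery_weighted_sum_const[OF lottery_unif[OF A(1)]] by simp
  also have "\<dots> < EU u i th (unif A)"
    unfolding EU_def
  proof (rule sum_strict_mono_ex1)
    show "\<forall>x\<in>UNIV. unif A x * u i th b \<le> unif A x * u i th x"
      using assms(3) by (auto simp: unif_def intro!: divide_right_mono)
    show "\<exists>x\<in>UNIV. unif A x * u i th b < unif A x * u i th x"
      using assms A by (intro bexI[of _ a]) (auto simp: unif_def intro!: divide_strict_right_mono)
  qed simp
  finally show ?thesis .
qed

lemma EU_convex_comb:
  "EU u i th (\<lambda>x. t * p x + s * q x) = t * EU u i th p + s * EU u i th q"
  by (simp add: EU_def sum.distrib sum_distrib_left distrib_right mult.assoc)

lemma lottery_convex_comb: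
  assumes "lottery p" "lottery q" "0 \<le> t" "t \<le> 1"
  shows "lottery (\<lambda>x. t * p x + (1 - t) * q x)"
  using assms by (auto simp: lottery_def sum.distrib sum_distrib_left[symmetric])

text \<open>If \<open>z\<close> itself is too good, mix it with the worst outcome \<open>b\<close> so that the expected utility
  drops to exactly \<open>v\<close>.\<close>

lemma exists_Lot_EU_le_with_supp:
  fixes Z :: "'z::finite set"
  assumes b: "b \<in> Z" "\<forall>x\<in>Z. u i th b \<le> u i th x" "u i th b < v" and z: "z \<in> Z"
  obtains y where "y \<in> Lot Z" "z \<in> supp y" "EU u i th y \<le> v"
proof (cases "u i th z \<le> v")
  case True
  then show ?thesis
    using that[of "unif {z}"] unif_in_Lot[OF z] supp_unif[of "{z}"] EU_unif_singleton[of u i th z]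
    by auto
next
  case False
  define f where "f = u i th"
  define t where "t = (v - f b) / (f z - f b)"
  define y where "y = (\<lambda>x. t * unif {z} x + (1 - t) * unif {b} x)"
  have gt: "f b < f z" and zb: "z \<noteq> b" using False b unfolding f_def by auto
  have t: "0 < t" "t < 1" using False b gt unfolding t_def f_def by (auto simp: field_simps)
  have "lottery y" unfolding y_def using t by (intro lottery_convex_comb lottery_unif) auto
  moreover have "supp y \<subseteq> {z, b}" "z \<in> supp y"
    using zb t by (auto simp: y_def supp_def unif_def)
  moreover have "EU u i th y = f b + t * (f z - f b)"
    unfolding y_def EU_convex_comb EU_unif_singleton f_def by (simp add: algebra_simps)
  moreover have "t * (f z - f b) = v - f b" using gt unfolding t_def by simp
  ultimately show ?thesis using that[of y] b z by (auto simp: Lot_def)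
qed

lemma F_subset_Zstar: "F th \<subseteq> Zstar u F"
  by (auto simp: Zstar_def)

lemma LhatAB_subset_Lot_Zstar: "LhatAB u F i th \<subseteq> Lot (Zstar u F)"
  unfolding LhatAB_def Lot_def by (auto split: if_splits)

lemma GammaAB_subset_Zstar: "GammaAB u F j th \<subseteq> Zstar u F"
  using LhatAB_subset_Lot_Zstar[of u F j th] unfolding GammaAB_def Lot_def by blast

lemma supp_subset_GammaAB: "y \<in> LhatAB u F j th \<Longrightarrow> supp y \<subseteq> GammaAB u F j th"
  unfolding GammaAB_def by blast

lemma zmax_subset: "zmax u F i th E \<Longrightarrow> E' \<subseteq> E \<Longrightarrow> E' \<noteq> {} \<Longrightarrow> zmax u F i th E'"
  unfolding zmax_def argmax_on_def by blast

lemma Lam_antimono: "E' \<subseteq> E \<Longrightarrow> E' \<noteq> {} \<Longrightarrow> Lam u F i E \<subseteq> Lam u F i E'"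
  unfolding Lam_def using zmax_subset[of u F i _ E E'] by blast

lemma LY_unif_if_argmax:
  assumes A: "A \<noteq> {}" "A \<subseteq> argmax_on (u i th) S" and y: "lottery y" "supp y \<subseteq> S"
  shows "y \<in> LY u i (unif A) th"
proof -
  obtain a where a: "a \<in> A" using A by blast
  have const: "\<forall>z\<in>A. u i th z = u i th a"
  proof
    fix z assume "z \<in> A"
    with A(2) a have "z \<in> S" "a \<in> S" "\<forall>z'\<in>S. u i th z' \<le> u i th z" "\<forall>z'\<in>S. u i th z' \<le> u i th a"
      by (auto simp: argmax_on_def)
    then show "u i th z = u i th a" by (meson antisym)
  qed
  have "EU u i th (unif A) = u i th a" by (rule EU_unif_const[of A u i th "u i th a", OF A(1) const])
  moreover have "EU u i th y \<le> u i th a"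
    using A a y by (intro EU_le_if_bounded_on_supp) (auto simp: argmax_on_def)
  ultimately show ?thesis using y by (simp add: LY_def)
qed

lemma F_subset_if_zmax_covers_GammaAB:
  assumes mono: "unif_mono_AB u F" and ne: "F th \<noteq> {}"
    and E: "zmax u F j th' E" "F th \<subseteq> E" "GammaAB u F j th \<subseteq> E"
  shows "F th \<subseteq> F th'"
proof -
  have "LhatAB u F i th \<subseteq> LY u i (unif (F th)) th'" for i
  proof
    fix y assume y: "y \<in> LhatAB u F i th"
    then have "y \<in> Lot (Zstar u F)" by (rule subsetD[OF LhatAB_subset_Lot_Zstar])
    then have y': "lottery y" "supp y \<subseteq> Zstar u F" by (simp_all add: Lot_def)
    show "y \<in> LY u i (unif (F th)) th'"
    proof (cases "i = j")
      case True
      have "F th \<subseteq> argmax_on (u i th') E" using E True unfolding zmax_def by blast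
      moreover have "supp y \<subseteq> E" using supp_subset_GammaAB[of y u F j th] y E(3) True by blast
      ultimately show ?thesis using ne y'(1) by (intro LY_unif_if_argmax)
    next
      case False
      then have "F th \<subseteq> argmax_on (u i th') (Zstar u F)" using E unfolding zmax_def by blast
      then show ?thesis using ne y' by (intro LY_unif_if_argmax)
    qed
  qed
  then show ?thesis using mono unfolding unif_mono_AB_def by blast
qed

lemma Zstar_eq_Union_if_zmax:
  assumes "zmax u F j th' (Zstar u F)"
  shows "Zstar u F = (\<Union>th. F th)"
proof (cases "\<exists>i. imax u i UNIV")
  case False
  then have "Zstar u F = UNIV" by (simp add: Zstar_def)
  then have "imax u j UNIV" using assms unfolding zmax_def imax_def by auto
  with False show ?thesis by blast
qed (simp add: Zstar_def)

lemma Zstar_subset_F_if_zmax: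
  assumes "unif_mono_AB u F" "\<And>th. F th \<noteq> {}" "zmax u F j th' (Zstar u F)"
  shows "Zstar u F \<subseteq> F th'"
proof -
  have "F th \<subseteq> F th'" for th
    using assms F_subset_Zstar GammaAB_subset_Zstar by (rule F_subset_if_zmax_covers_GammaAB)
  then show ?thesis using Zstar_eq_Union_if_zmax[OF assms(3)] by auto
qed

definition LhatAB_restricted ::
  "('i \<Rightarrow> 'th \<Rightarrow> 'z::finite \<Rightarrow> real) \<Rightarrow> ('th \<Rightarrow> 'z set) \<Rightarrow> 'i \<Rightarrow> 'th \<Rightarrow> bool" where
  "LhatAB_restricted u F i th \<longleftrightarrow>
     F th \<subseteq> argmin_on (u i th) (Zstar u F) \<and> Xi u F i th \<noteq> {} \<and>
     Lam u F i (Zstar u F \<inter> LZ u i (F th) th) \<noteq> {}"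

lemma LhatAB_if_restricted:
  "LhatAB_restricted u F i th \<Longrightarrow>
     LhatAB u F i th = Lot (Zstar u F \<inter> LZ u i (F th) th \<inter> (\<Union>K\<in>Xi u F i th. \<Inter>th'\<in>K. F th'))"
  unfolding LhatAB_def LhatAB_restricted_def by simp

lemma LhatAB_if_not_restricted:
  "\<not> LhatAB_restricted u F i th \<Longrightarrow> LhatAB u F i th = Lot (Zstar u F) \<inter> LY u i (unif (F th)) th"
  unfolding LhatAB_def LhatAB_restricted_def by (simp only: if_False)

lemma GammaAB_eq_if_LhatAB_eq_Lot:
  assumes "LhatAB u F j th = Lot S"
  shows "GammaAB u F j th = S"
proof
  show "GammaAB u F j th \<subseteq> S" unfolding GammaAB_def assms Lot_def by blast
  show "S \<subseteq> GammaAB u F j th"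
  proof
    fix z assume "z \<in> S"
    then show "z \<in> GammaAB u F j th"
      using unif_in_Lot[of z S] supp_unif[of "{z}"] supp_subset_GammaAB[of "unif {z}" u F j th] assms
      by simp
  qed
qed

lemma subset_LZ_if_argmin: "A \<subseteq> argmin_on (u i th) S \<Longrightarrow> A \<subseteq> LZ u i A th"
  unfolding argmin_on_def LZ_def by blast

lemma F_subset_Inter_if_ThetaI: "K \<subseteq> ThetaI u F i th \<Longrightarrow> F th \<subseteq> (\<Inter>t\<in>K. F t)"
  unfolding ThetaI_def by blast

lemma Xi_subset_ThetaI: "K \<in> Xi u F i th \<Longrightarrow> K \<subseteq> ThetaI u F i th"
  unfolding Xi_def by blast

lemma F_subset_Inter_Xi:
  assumes "F th \<subseteq> argmin_on (u i th) (Zstar u F)" "K \<in> Xi u F i th"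
  shows "F th \<subseteq> Zstar u F \<inter> LZ u i (F th) th \<inter> (\<Inter>t\<in>K. F t)"
  using F_subset_Zstar[of F th u] subset_LZ_if_argmin[of "F th" u i th, OF assms(1)]
    F_subset_Inter_if_ThetaI[OF Xi_subset_ThetaI[OF assms(2)]] by blast

lemma F_subset_GammaAB:
  assumes ne: "F th \<noteq> {}"
  shows "F th \<subseteq> GammaAB u F j th"
proof (cases "LhatAB_restricted u F j th")
  case True
  then obtain K where K: "K \<in> Xi u F j th" and argmin: "F th \<subseteq> argmin_on (u j th) (Zstar u F)"
    unfolding LhatAB_restricted_def by blast
  have "F th \<subseteq> Zstar u F \<inter> LZ u j (F th) th \<inter> (\<Union>K\<in>Xi u F j th. \<Inter>t\<in>K. F t)"
    using F_subset_Inter_Xi[OF argmin K] K by blast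
  then show ?thesis using GammaAB_eq_if_LhatAB_eq_Lot[OF LhatAB_if_restricted[OF True]] by simp
next
  case False
  have "unif (F th) \<in> LhatAB u F j th"
    using LhatAB_if_not_restricted[OF False] lottery_unif[OF ne] supp_unif[OF ne] F_subset_Zstar
    by (simp add: Lot_def LY_def)
  then show ?thesis using supp_subset_GammaAB[of "unif (F th)" u F j th] supp_unif[OF ne] by simp
qed

lemma ThetaI_if_zmax_GammaAB:
  assumes "unif_mono_AB u F" "F th \<noteq> {}" "zmax u F j th' (GammaAB u F j th)"
  shows "th' \<in> ThetaI u F j th"
proof -
  have FG: "F th \<subseteq> GammaAB u F j th" using assms(2) by (rule F_subset_GammaAB)
  then have "F th \<subseteq> F th'" using F_subset_if_zmax_covers_GammaAB[OF assms FG] by blast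
  then show ?thesis using zmax_subset[OF assms(3) FG assms(2)] by (simp add: ThetaI_def)
qed

lemma Xi_nonempty:
  assumes ThetaI: "th' \<in> ThetaI u F j th" and Lam: "th' \<in> Lam u F j (Zstar u F \<inter> LZ u j (F th) th)"
    and FM: "F th \<subseteq> Zstar u F \<inter> LZ u j (F th) th" and ne: "F th \<noteq> {}"
  shows "Xi u F j th \<noteq> {}"
proof -
  define M where "M = Zstar u F \<inter> LZ u j (F th) th"
  define T where "T = ThetaI u F j th"
  define \<Phi> where "\<Phi> K = T \<inter> Lam u F j (M \<inter> (\<Inter>t\<in>K \<inter> T. F t))" for K
  have core_ne: "M \<inter> (\<Inter>t\<in>K \<inter> T. F t) \<noteq> {}" for K
    using FM ne F_subset_Inter_if_ThetaI[of "K \<inter> T" u F j th] unfolding M_def T_def by blast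
  have "mono \<Phi>"
  proof
    fix K K' :: "'a set" assume "K \<subseteq> K'"
    then have "M \<inter> (\<Inter>t\<in>K' \<inter> T. F t) \<subseteq> M \<inter> (\<Inter>t\<in>K \<inter> T. F t)" by blast
    from Lam_antimono[OF this core_ne, of u F j] show "\<Phi> K \<subseteq> \<Phi> K'" unfolding \<Phi>_def by blast
  qed
  define K where "K = gfp \<Phi>"
  have K_eq: "\<Phi> K = K" unfolding K_def using gfp_fixpoint[OF \<open>mono \<Phi>\<close>] .
  then have KT: "K \<subseteq> T" unfolding \<Phi>_def by blast
  have "M \<inter> F th' \<noteq> {}" using ThetaI FM ne unfolding ThetaI_def M_def by blast
  then have "th' \<in> Lam u F j (M \<inter> F th')"
    using Lam Lam_antimono[of "M \<inter> F th'" M u F j] unfolding M_def by blast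
  then have "{th'} \<subseteq> \<Phi> {th'}" using ThetaI unfolding \<Phi>_def T_def by simp
  then have "th' \<in> K" unfolding K_def using gfp_upperbound by blast
  moreover have "T \<inter> Lam u F j (M \<inter> (\<Inter>t\<in>K. F t)) = K"
    using K_eq KT unfolding \<Phi>_def by (simp add: Int_absorb2)
  ultimately have "K \<in> Xi u F j th" using KT unfolding Xi_def T_def M_def by auto
  then show ?thesis by blast
qed

lemma LhatAB_restricted_if_argmin:
  assumes mono: "unif_mono_AB u F" and ne: "F th \<noteq> {}"
    and zmax: "zmax u F j th' (GammaAB u F j th)" and argmin: "F th \<subseteq> argmin_on (u j th) (Zstar u F)"
  shows "LhatAB_restricted u F j th"
proof (rule ccontr)
  assume not_restricted: "\<not> LhatAB_restricted u F j th"
  define M where "M = Zstar u F \<inter> LZ u j (F th) th"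
  have FM: "F th \<subseteq> M"
    using F_subset_Zstar[of F th u] subset_LZ_if_argmin[of "F th" u j th, OF argmin]
    unfolding M_def by blast
  have "M \<subseteq> GammaAB u F j th"
  proof
    fix z assume z: "z \<in> M"
    have "u j th z \<le> EU u j th (unif (F th))"
      using z lottery_unif[OF ne] supp_unif[OF ne]
      by (intro EU_ge_if_bounded_on_supp[of _ "F th"]) (auto simp: M_def LZ_def)
    then have "unif {z} \<in> LhatAB u F j th"
      using LhatAB_if_not_restricted[OF not_restricted] unif_in_Lot[of z "Zstar u F"] z
      by (auto simp: M_def Lot_def LY_def EU_unif_singleton)
    then show "z \<in> GammaAB u F j th"
      using supp_subset_GammaAB[of "unif {z}" u F j th] supp_unif[of "{z}"] by simp
  qed
  then have "th' \<in> Lam u F j M"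
    using zmax_subset[OF zmax] FM ne unfolding Lam_def by blast
  moreover have "Xi u F j th \<noteq> {}"
    using Xi_nonempty[OF ThetaI_if_zmax_GammaAB[OF mono ne zmax]] calculation FM ne
    unfolding M_def by blast
  ultimately have "LhatAB_restricted u F j th"
    using argmin unfolding LhatAB_restricted_def M_def by blast
  with not_restricted show False ..
qed

lemma GammaAB_eq_Zstar_if_not_argmin:
  assumes not_restricted: "\<not> LhatAB_restricted u F j th" and ne: "F th \<noteq> {}"
    and not_argmin: "\<not> F th \<subseteq> argmin_on (u j th) (Zstar u F)"
  shows "GammaAB u F j th = Zstar u F"
proof
  show "GammaAB u F j th \<subseteq> Zstar u F" by (rule GammaAB_subset_Zstar)
  obtain b where b: "b \<in> Zstar u F" "\<forall>x\<in>Zstar u F. u j th b \<le> u j th x"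
    using ex_is_arg_min_if_finite[of "Zstar u F" "u j th"] ne F_subset_Zstar[of F th u]
    by (auto simp: is_arg_min_linorder)
  obtain a where "a \<in> F th" "u j th b < u j th a"
    using not_argmin b F_subset_Zstar[of F th u] unfolding argmin_on_def by force
  then have worse: "u j th b < EU u j th (unif (F th))"
    using b F_subset_Zstar[of F th u] by (intro EU_unif_gt_min) auto
  show "Zstar u F \<subseteq> GammaAB u F j th"
  proof
    fix z assume "z \<in> Zstar u F"
    then obtain y where "y \<in> Lot (Zstar u F)" "z \<in> supp y" "EU u j th y \<le> EU u j th (unif (F th))"
      by (rule exists_Lot_EU_le_with_supp[of b "Zstar u F" u j th, OF b worse])
    moreover from this(1,3) have "y \<in> LhatAB u F j th"
      using LhatAB_if_not_restricted[OF not_restricted] by (simp add: Lot_def LY_def)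
    ultimately show "z \<in> GammaAB u F j th" using supp_subset_GammaAB[of y u F j th] by blast
  qed
qed

lemma GammaAB_subset_F_if_restricted:
  assumes restricted: "LhatAB_restricted u F j th" and ne: "F th \<noteq> {}"
    and zmax: "zmax u F j th' (GammaAB u F j th)" and ThetaI: "th' \<in> ThetaI u F j th"
  shows "GammaAB u F j th \<subseteq> F th'"
proof
  define M where "M = Zstar u F \<inter> LZ u j (F th) th"
  have Gamma: "GammaAB u F j th = M \<inter> (\<Union>K\<in>Xi u F j th. \<Inter>t\<in>K. F t)"
    unfolding M_def by (rule GammaAB_eq_if_LhatAB_eq_Lot[OF LhatAB_if_restricted[OF restricted]])
  fix z assume "z \<in> GammaAB u F j th"
  then obtain K where K: "K \<in> Xi u F j th" "z \<in> (\<Inter>t\<in>K. F t)" unfolding Gamma by blast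
  have argmin: "F th \<subseteq> argmin_on (u j th) (Zstar u F)"
    using restricted unfolding LhatAB_restricted_def by blast
  have "M \<inter> (\<Inter>t\<in>K. F t) \<noteq> {}"
    using F_subset_Inter_Xi[OF argmin K(1)] ne unfolding M_def by blast
  moreover have "M \<inter> (\<Inter>t\<in>K. F t) \<subseteq> GammaAB u F j th" using K(1) unfolding Gamma by blast
  ultimately have "th' \<in> Lam u F j (M \<inter> (\<Inter>t\<in>K. F t))"
    using zmax_subset[OF zmax] unfolding Lam_def by blast
  moreover have "ThetaI u F j th \<inter> Lam u F j (M \<inter> (\<Inter>t\<in>K. F t)) = K"
    using K(1) unfolding Xi_def M_def by simp
  ultimately have "th' \<in> K" using ThetaI by blast
  then show "z \<in> F th'" using K(2) by blast
qed

theorem lemma9: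
  fixes u :: "'i::finite \<Rightarrow> 'th::countable \<Rightarrow> 'z::finite \<Rightarrow> real"
    and F :: "'th \<Rightarrow> 'z set"
  assumes "card (UNIV :: 'i set) \<ge> 3"
    and "\<And>th. F th \<noteq> {}"
    and "unif_mono_AB u F"
  shows "(\<forall>j th'. zmax u F j th' (Zstar u F) \<longrightarrow> Zstar u F \<subseteq> F th')
       \<and> (\<forall>j th th'. zmax u F j th' (GammaAB u F j th) \<longrightarrow> GammaAB u F j th \<subseteq> F th')"
proof (intro conjI allI impI)
  fix j th'
  assume "zmax u F j th' (Zstar u F)"
  then show "Zstar u F \<subseteq> F th'" by (rule Zstar_subset_F_if_zmax[OF assms(3,2)])
next
  fix j th th'
  assume zmax: "zmax u F j th' (GammaAB u F j th)"
  show "GammaAB u F j th \<subseteq> F th'"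
  proof (cases "LhatAB_restricted u F j th")
    case True
    have "th' \<in> ThetaI u F j th" by (rule ThetaI_if_zmax_GammaAB[OF assms(3,2) zmax])
    then show ?thesis by (rule GammaAB_subset_F_if_restricted[OF True assms(2) zmax])
  next
    case False
    then have "\<not> F th \<subseteq> argmin_on (u j th) (Zstar u F)"
      using LhatAB_restricted_if_argmin[OF assms(3,2) zmax] by blast
    then have "GammaAB u F j th = Zstar u F"
      by (rule GammaAB_eq_Zstar_if_not_argmin[OF False assms(2)])
    then show ?thesis using Zstar_subset_F_if_zmax[OF assms(3,2)] zmax by simp
  qed
qed

end
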